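(* Let $a,b,c\in\mathbb{C}^*$ satisfy $a,b,c,a/b,a/c,b/c\notin q^{\mathbb{Z}}$ and $$q^{\mathbb{Z}}a\cup q^{\mathbb{Z}}b\cup q^{\mathbb{Z}}\tfrac{aq}{c}\cup q^{\mathbb{Z}}\tfrac{bq}{c}=q^{\mathbb{Z}}a\cup(-q^{\mathbb{Z}}a)\cup q^{\mathbb{Z}+1/2}a\cup(-q^{\mathbb{Z}+1/2}a).$$ Let $A,B,C,D\in\mathbb{C}$ and $n,m,l,k,N,M,L,K\in\mathbb{Z}$ be such that $$Az^{n/2}\theta_q(q^Naz)+Bz^{m/2}\theta_q(-q^Maz)+Cz^{l/2}\theta_q(q^Lq^{1/2}az)+Dz^{k/2}\theta_q(-q^Kq^{1/2}az)=0$$ identically (as multivalued meromorphic functions of $z\in\mathbb{C}^*$, with $z^{j/2}$ a determination of $e^{\frac{j}{2}\log z}$). Then $A=B=C=D=0$.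
   Context: $q\in\mathbb{C}$ with $0<|q|<1$; fix $\tau$ with $q=e^{-2\pi i\tau}$ and put $q^y:=e^{-2\pi i\tau y}$ (so $q^{1/2}=e^{-\pi i\tau}$); $q^X=\{q^x:x\in X\}$. $(x;q)_\infty=\prod_{j\ge0}(1-xq^j)$ and $\theta_q(z)=(q;q)_\infty(z;q)_\infty(q/z;q)_\infty$ is the Jacobi theta function, meromorphic (holomorphic) on $\mathbb{C}^*$, with $\theta_q(qz)=-z^{-1}\theta_q(z)$. *)

theory Defs
  imports "HOL-Analysis.Analysis"
begin

definition qpoch_inf :: "complex \<Rightarrow> complex \<Rightarrow> complex" where
  "qpoch_inf x q = (\<Prod>j. (1 - x * q ^ j))"

definition jtheta :: "complex \<Rightarrow> complex \<Rightarrow> complex" where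
  "jtheta q z = qpoch_inf q q * qpoch_inf z q * qpoch_inf (q / z) q"

text \<open>q^y := exp(-2 pi i tau y), for the fixed tau with q = exp(-2 pi i tau).\<close>
definition qpow :: "complex \<Rightarrow> complex \<Rightarrow> complex" where
  "qpow \<tau> y = exp (- 2 * pi * \<i> * \<tau> * y)"

definition qorbit :: "complex \<Rightarrow> complex \<Rightarrow> complex set" where
  "qorbit q x = {q powi n * x | n. True}"

end

theory Submission
  imports Defs "HOL-Computational_Algebra.Polynomial"
begin

text \<open>
  In the coordinate w = log z, every term X z^(j/2) theta_q(kappa z) is a simultaneous
  eigenfunction of two shifts: w |-> w + log q multiplies it by c e^(-w) with
  c = -q^(j/2)/kappa (because theta_q(qz) = -theta_q(z)/z), and w |-> w + 2 pi i multiplies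
  it by (-1)^j. As the four values of kappa lie in the four distinct classes +-q^Z a and
  +-q^(Z+1/2) a, the four multiplier pairs (c, (-1)^j) are pairwise distinct. Iterating the
  first shift turns the identity into vanishing power sums sum_i c_i^r G_i = 0 for all r;
  after splitting into the +-1-eigenparts of the second shift, Lagrange interpolation shows
  that every term vanishes identically, and since theta_q is not identically zero, so does
  every coefficient.
\<close>

lemma qpoch_inf_convergent:
  fixes q x :: complex
  assumes "norm q < 1"
  shows "convergent_prod (\<lambda>j. 1 - x * q ^ j)"
proof -
  have "summable (\<lambda>j. norm x * norm q ^ j)"
    using assms by (intro summable_mult summable_geometric) auto
  then have "summable (\<lambda>j. norm ((1 - x * q ^ j) - 1))"
    by (simp add: norm_mult norm_power)
  then show ?thesis
    by (intro abs_convergent_prod_imp_convergent_prod summable_imp_abs_convergent_prod)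
qed

lemma qpoch_inf_shift:
  fixes q x :: complex
  assumes "norm q < 1"
  shows "qpoch_inf x q = (1 - x) * qpoch_inf (x * q) q"
proof -
  have "(\<lambda>j. 1 - x * q ^ j) has_prod ((\<Prod>j<1. 1 - x * q ^ j) * (\<Prod>j. 1 - x * q ^ (j + 1)))"
    by (rule has_prod_ignore_initial_segment'[OF qpoch_inf_convergent[OF assms]])
  then have "qpoch_inf x q = (1 - x) * (\<Prod>j. 1 - x * q ^ (j + 1))"
    unfolding qpoch_inf_def using has_prod_unique by fastforce
  then show ?thesis
    by (simp add: qpoch_inf_def mult.assoc mult.left_commute)
qed

lemma qpoch_inf_nonzero:
  fixes q x :: complex
  assumes "norm q < 1" "norm x < 1"
  shows "qpoch_inf x q \<noteq> 0"
  unfolding qpoch_inf_def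
proof (rule prodinf_nonzero[OF qpoch_inf_convergent[OF assms(1)]])
  fix j
  have "norm (x * q ^ j) \<le> norm x"
    using assms by (simp add: norm_mult norm_power mult_left_le power_le_one)
  with assms(2) show "1 - x * q ^ j \<noteq> 0"
    by auto
qed

lemma jtheta_mult_q:
  fixes q z :: complex
  assumes "norm q < 1" "q \<noteq> 0" "z \<noteq> 0"
  shows "jtheta q (q * z) = - jtheta q z / z"
proof -
  have z: "qpoch_inf z q = (1 - z) * qpoch_inf (q * z) q"
    using qpoch_inf_shift[OF assms(1), of z] by (simp add: mult.commute)
  have qz: "qpoch_inf (q / (q * z)) q = (1 - 1 / z) * qpoch_inf (q / z) q"
    using qpoch_inf_shift[OF assms(1), of "1 / z"] assms(2) by (simp add: field_simps)
  show ?thesis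
    using assms unfolding jtheta_def z qz by (simp add: field_simps)
qed

lemma jtheta_nonzero:
  fixes q z :: complex
  assumes "norm q < norm z" "norm z < 1"
  shows "jtheta q z \<noteq> 0"
proof -
  have "norm q < 1" "z \<noteq> 0"
    using assms by auto
  moreover have "norm (q / z) < 1"
    using assms by (simp add: norm_divide divide_less_eq)
  ultimately show ?thesis
    unfolding jtheta_def using assms(2) by (simp add: qpoch_inf_nonzero)
qed

text \<open>The multivalued term X z^(j/2) theta_q(kappa z), made single-valued on the cover z = exp w.\<close>
definition theta_term :: "complex \<Rightarrow> complex \<Rightarrow> complex \<Rightarrow> int \<Rightarrow> complex \<Rightarrow> complex" where
  "theta_term q \<kappa> X j w = X * exp (of_int j / 2 * w) * jtheta q (\<kappa> * exp w)"

lemma theta_term_shift: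
  fixes q t \<kappa> X w :: complex and j :: int
  assumes "exp t = q" "norm q < 1" "\<kappa> \<noteq> 0"
  shows "theta_term q \<kappa> X j (w + t) = - exp (of_int j / 2 * t) / \<kappa> * exp (- w) * theta_term q \<kappa> X j w"
proof -
  have exp_shift: "exp (of_int j / 2 * (w + t)) = exp (of_int j / 2 * w) * exp (of_int j / 2 * t)"
    by (simp add: distrib_left exp_add)
  have "jtheta q (\<kappa> * exp (w + t)) = jtheta q (q * (\<kappa> * exp w))"
    using assms(1) by (simp add: exp_add algebra_simps)
  also have "\<dots> = - jtheta q (\<kappa> * exp w) / (\<kappa> * exp w)"
    using assms by (intro jtheta_mult_q) auto
  finally have theta_shift: "jtheta q (\<kappa> * exp (w + t)) = - jtheta q (\<kappa> * exp w) / (\<kappa> * exp w)" .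
  show ?thesis
    using assms(3) unfolding theta_term_def exp_shift theta_shift by (simp add: exp_minus field_simps)
qed

lemma theta_term_period:
  "theta_term q \<kappa> X j (w + 2 * of_real pi * \<i>) = (if even j then 1 else -1) * theta_term q \<kappa> X j w"
proof -
  have "exp (of_int j / 2 * (w + 2 * of_real pi * \<i>)) = exp (of_int j / 2 * w) * exp (of_int j * (pi * \<i>))"
    by (simp add: exp_add algebra_simps)
  also have "exp (of_int j * (pi * \<i>)) = (-1) powi j"
    by (simp flip: exp_power_int)
  finally show ?thesis
    unfolding theta_term_def by (simp add: exp_add power_int_minus_left)
qed

lemma theta_term_eq_0_imp_coeff_eq_0:
  fixes q \<kappa> X :: complex and j :: int
  assumes "0 < norm q" "norm q < 1" "\<kappa> \<noteq> 0" "\<And>w. theta_term q \<kappa> X j w = 0"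
  shows "X = 0"
proof -
  define z :: complex where "z = of_real (sqrt (norm q))"
  have "norm q < norm z" "norm z < 1"
    using assms(1,2) by (auto simp: z_def power2_eq_square intro!: real_less_rsqrt)
  moreover have "\<kappa> * exp (Ln (z / \<kappa>)) = z"
    using assms(1,3) by (simp add: z_def)
  ultimately have "jtheta q (\<kappa> * exp (Ln (z / \<kappa>))) \<noteq> 0"
    by (simp add: jtheta_nonzero)
  with assms(4)[of "Ln (z / \<kappa>)"] show ?thesis
    by (simp add: theta_term_def)
qed

lemma power_sums_eq_0_imp_poly_sum_eq_0:
  fixes c x :: "'i \<Rightarrow> 'a :: comm_ring_1"
  assumes "\<And>r. (\<Sum>i\<in>I. c i ^ r * x i) = 0"
  shows "(\<Sum>i\<in>I. poly p (c i) * x i) = 0"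
proof -
  have "(\<Sum>i\<in>I. poly p (c i) * x i) = (\<Sum>r\<le>degree p. coeff p r * (\<Sum>i\<in>I. c i ^ r * x i))"
    by (simp add: poly_altdef sum_distrib_left sum_distrib_right mult.assoc sum.swap[of _ I])
  also have "\<dots> = 0"
    by (simp add: assms)
  finally show ?thesis .
qed

lemma power_sums_eq_0_imp_eq_0:
  fixes c x :: "'i \<Rightarrow> 'a :: idom"
  assumes "finite I" "\<And>r. (\<Sum>i\<in>I. c i ^ r * x i) = 0"
    and "\<And>i i'. i \<in> I \<Longrightarrow> i' \<in> I \<Longrightarrow> i \<noteq> i' \<Longrightarrow> c i = c i' \<Longrightarrow> x i = 0 \<or> x i' = 0"
    and "i \<in> I"
  shows "x i = 0"
proof (rule ccontr)
  assume xi: "x i \<noteq> 0"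
  \<comment> \<open>p vanishes on every value of c except c i, so the power sums isolate the class of i\<close>
  define p where "p = (\<Prod>u\<in>c ` I - {c i}. [:- u, 1:])"
  have poly_p: "poly p y = (\<Prod>u\<in>c ` I - {c i}. y - u)" for y
    by (simp add: p_def poly_prod)
  have "(\<Sum>i'\<in>I. poly p (c i') * x i') = poly p (c i) * x i + (\<Sum>i'\<in>I - {i}. poly p (c i') * x i')"
    using assms(1,4) by (simp add: sum.remove)
  also have "(\<Sum>i'\<in>I - {i}. poly p (c i') * x i') = 0"
  proof (intro sum.neutral ballI)
    fix i' assume i': "i' \<in> I - {i}"
    show "poly p (c i') * x i' = 0"
    proof (cases "c i' = c i")
      case True
      then show ?thesis using assms(3)[of i i'] assms(4) i' xi by auto
    next
      case False
      then show ?thesis using i' assms(1) by (auto simp: poly_p)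
    qed
  qed
  finally have "poly p (c i) * x i = 0"
    using power_sums_eq_0_imp_poly_sum_eq_0[OF assms(2)] by simp
  moreover have "poly p (c i) \<noteq> 0"
    using assms(1) by (simp add: poly_p)
  ultimately show False
    using xi by simp
qed

lemma quasiperiodic_sum_eq_0_imp_eq_0:
  fixes G :: "'i \<Rightarrow> 'a :: plus \<Rightarrow> 'b :: field_char_0"
  assumes "finite I"
    and sum_eq_0: "\<And>w. (\<Sum>i\<in>I. G i w) = 0"
    and shift: "\<And>i w. i \<in> I \<Longrightarrow> G i (w + t) = c i * f w * G i w"
    and f_nonzero: "\<And>w. f w \<noteq> 0"
    and period: "\<And>i w. i \<in> I \<Longrightarrow> G i (w + p) = \<epsilon> i * G i w"
    and sign: "\<And>i. i \<in> I \<Longrightarrow> \<epsilon> i = 1 \<or> \<epsilon> i = -1"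
    and inj: "inj_on (\<lambda>i. (c i, \<epsilon> i)) I"
    and "i \<in> I"
  shows "G i w = 0"
proof -
  have power_sums: "(\<Sum>i\<in>I. c i ^ r * G i w) = 0" for r w
  proof (induction r arbitrary: w)
    case 0
    then show ?case using sum_eq_0 by simp
  next
    case (Suc r)
    have "f w * (\<Sum>i\<in>I. c i ^ Suc r * G i w) = (\<Sum>i\<in>I. c i ^ r * G i (w + t))"
      by (simp add: shift sum_distrib_left algebra_simps)
    then show ?case
      using Suc.IH f_nonzero by simp
  qed
  have half_eq_0: "(1 + \<sigma> * \<epsilon> i) * G i w = 0" if "\<sigma> = 1 \<or> \<sigma> = -1" for \<sigma>
  proof (rule power_sums_eq_0_imp_eq_0[OF assms(1) _ _ assms(8)])
    fix r
    have "(\<Sum>i\<in>I. c i ^ r * ((1 + \<sigma> * \<epsilon> i) * G i w))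
        = (\<Sum>i\<in>I. c i ^ r * G i w) + \<sigma> * (\<Sum>i\<in>I. c i ^ r * G i (w + p))"
      by (simp add: period sum.distrib sum_distrib_left algebra_simps)
    then show "(\<Sum>i\<in>I. c i ^ r * ((1 + \<sigma> * \<epsilon> i) * G i w)) = 0"
      by (simp add: power_sums)
  next
    fix i' i'' assume "i' \<in> I" "i'' \<in> I" "i' \<noteq> i''" "c i' = c i''"
    then have "\<epsilon> i' \<noteq> \<epsilon> i''"
      using inj by (auto dest: inj_onD)
    then show "(1 + \<sigma> * \<epsilon> i') * G i' w = 0 \<or> (1 + \<sigma> * \<epsilon> i'') * G i'' w = 0"
      using sign[OF \<open>i' \<in> I\<close>] sign[OF \<open>i'' \<in> I\<close>] that by auto
  qed
  have "2 * G i w = (1 + 1 * \<epsilon> i) * G i w + (1 + (-1) * \<epsilon> i) * G i w"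
    by (simp add: algebra_simps)
  also have "\<dots> = 0"
    by (simp only: half_eq_0[OF disjI1[OF refl]] half_eq_0[OF disjI2[OF refl]] add_0)
  finally show ?thesis
    by simp
qed

lemma sign_mult_exp_int_eq_iff:
  fixes t s s' :: complex and p p' :: int
  assumes "Re t \<noteq> 0" "s = 1 \<or> s = -1" "s' = 1 \<or> s' = -1"
  shows "s * exp (of_int p * t) = s' * exp (of_int p' * t) \<longleftrightarrow> s = s' \<and> p = p'"
proof
  assume eq: "s * exp (of_int p * t) = s' * exp (of_int p' * t)"
  then have "norm (exp (of_int p * t)) = norm (exp (of_int p' * t))"
    using assms(2,3) by (metis norm_minus_cancel mult_1 mult_minus1)
  then have "of_int p * Re t = of_int p' * Re t"
    by simp
  then have "p = p'"
    using assms(1) by simp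
  with eq show "s = s' \<and> p = p'"
    by simp
qed simp

lemma theta_terms_linearly_independent:
  fixes t a :: complex and \<kappa> s X :: "'i \<Rightarrow> complex" and r j :: "'i \<Rightarrow> int"
  assumes "finite I" "Re t < 0" "a \<noteq> 0"
    and \<kappa>_eq: "\<And>i. i \<in> I \<Longrightarrow> \<kappa> i = s i * exp (of_int (r i) * (t / 2)) * a"
    and sign: "\<And>i. i \<in> I \<Longrightarrow> s i = 1 \<or> s i = -1"
    and inj: "inj_on (\<lambda>i. (s i, r i mod 2)) I"
    and sum_eq_0: "\<And>w. (\<Sum>i\<in>I. theta_term (exp t) (\<kappa> i) (X i) (j i) w) = 0"
    and "i \<in> I"
  shows "X i = 0"
proof -
  have Re_half_t: "Re (t / 2) \<noteq> 0"
    using assms(2) by simp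
  define q where "q = exp t"
  have q: "0 < norm q" "norm q < 1"
    using assms(2) by (simp_all add: q_def)
  have \<kappa>_nonzero: "\<kappa> i \<noteq> 0" if "i \<in> I" for i
    using sign[OF that] assms(3) by (auto simp: \<kappa>_eq[OF that])
  define c where "c i = - exp (of_int (j i) / 2 * t) / \<kappa> i" for i
  define \<epsilon> :: "'i \<Rightarrow> complex" where "\<epsilon> i = (if even (j i) then 1 else -1)" for i
  have c_eq: "c i = - (s i * exp (of_int (j i - r i) * (t / 2))) / a" if "i \<in> I" for i
  proof -
    have "exp (of_int (j i) / 2 * t) = exp (of_int (r i) * (t / 2)) * exp (of_int (j i - r i) * (t / 2))"
      by (simp add: mult_exp_exp algebra_simps add_divide_distrib)
    then show ?thesis
      using sign[OF that] assms(3) by (auto simp: c_def \<kappa>_eq[OF that] field_simps)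
  qed
  have characters_inj: "inj_on (\<lambda>i. (c i, \<epsilon> i)) I"
  proof (rule inj_onI)
    fix i i' assume i: "i \<in> I" "i' \<in> I" and eq: "(c i, \<epsilon> i) = (c i', \<epsilon> i')"
    then have "s i * exp (of_int (j i - r i) * (t / 2)) = s i' * exp (of_int (j i' - r i') * (t / 2))"
      using assms(3) by (simp add: c_eq)
    then have "s i = s i'" "j i - r i = j i' - r i'"
      using sign_mult_exp_int_eq_iff[OF Re_half_t sign[OF i(1)] sign[OF i(2)]] by blast+
    moreover have "even (j i) \<longleftrightarrow> even (j i')"
      using eq by (auto simp: \<epsilon>_def split: if_splits)
    ultimately have "s i = s i'" "r i mod 2 = r i' mod 2"
      by presburger+
    then show "i = i'"
      using inj i by (auto dest: inj_onD)
  qed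
  have "theta_term q (\<kappa> i) (X i) (j i) w = 0" for w
  proof (rule quasiperiodic_sum_eq_0_imp_eq_0[where G = "\<lambda>i. theta_term q (\<kappa> i) (X i) (j i)"
        and f = "\<lambda>w. exp (- w)", OF assms(1) _ _ _ _ _ characters_inj assms(8)])
    show "(\<Sum>i\<in>I. theta_term q (\<kappa> i) (X i) (j i) w) = 0" for w
      using sum_eq_0 by (simp add: q_def)
    show "theta_term q (\<kappa> i) (X i) (j i) (w + t) = c i * exp (- w) * theta_term q (\<kappa> i) (X i) (j i) w"
      if "i \<in> I" for i w
      using theta_term_shift[OF q_def[symmetric] q(2) \<kappa>_nonzero[OF that]] by (simp add: c_def)
    show "theta_term q (\<kappa> i) (X i) (j i) (w + 2 * of_real pi * \<i>) = \<epsilon> i * theta_term q (\<kappa> i) (X i) (j i) w"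
      for i w
      by (simp add: \<epsilon>_def theta_term_period)
  qed (auto simp: \<epsilon>_def)
  then show ?thesis
    using theta_term_eq_0_imp_coeff_eq_0 q \<kappa>_nonzero assms(8) by blast
qed

theorem mainTheorem3:
  fixes q \<tau> a b c A B C D :: complex
    and n m l k N M L K :: int
  assumes hq: "q = exp (- 2 * pi * \<i> * \<tau>)"
    and hq0: "0 < norm q" and hq1: "norm q < 1"
    and ha: "a \<noteq> 0" and hb: "b \<noteq> 0" and hc: "c \<noteq> 0"
    and hgen: "a \<notin> qorbit q 1" "b \<notin> qorbit q 1" "c \<notin> qorbit q 1"
              "a / b \<notin> qorbit q 1" "a / c \<notin> qorbit q 1" "b / c \<notin> qorbit q 1"
    and hsets: "qorbit q a \<union> qorbit q b \<union> qorbit q (a * q / c) \<union> qorbit q (b * q / c)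
              = qorbit q a \<union> uminus ` qorbit q a \<union> qorbit q (qpow \<tau> (1/2) * a)
                \<union> uminus ` qorbit q (qpow \<tau> (1/2) * a)"
    and hid: "\<forall>w::complex. let z = exp w in
                A * exp (of_int n / 2 * w) * jtheta q (q powi N * a * z)
              + B * exp (of_int m / 2 * w) * jtheta q (- (q powi M) * a * z)
              + C * exp (of_int l / 2 * w) * jtheta q (q powi L * qpow \<tau> (1/2) * a * z)
              + D * exp (of_int k / 2 * w) * jtheta q (- (q powi K) * qpow \<tau> (1/2) * a * z) = 0"
  shows "A = 0 \<and> B = 0 \<and> C = 0 \<and> D = 0"
proof -
  define t where "t = - 2 * pi * \<i> * \<tau>"
  have q_eq: "q = exp t"
    using hq by (simp add: t_def)
  have Re_t: "Re t < 0"
    using hq1 by (simp add: q_eq)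
  have q_powi: "q powi P = exp (of_int P * t)" for P
    by (simp add: q_eq exp_power_int)
  have q_half: "qpow \<tau> (1/2) = exp (t / 2)"
    by (simp add: qpow_def t_def)
  define \<kappa> where "\<kappa> = (!) [q powi N * a, - (q powi M) * a,
    q powi L * qpow \<tau> (1/2) * a, - (q powi K) * qpow \<tau> (1/2) * a]"
  define s :: "nat \<Rightarrow> complex" where "s = (!) [1, -1, 1, -1]"
  define r where "r = (!) [2 * N, 2 * M, 2 * L + 1, 2 * K + 1]"
  define j where "j = (!) [n, m, l, k]"
  define X where "X = (!) [A, B, C, D]"
  have I: "{0..<4} = {0, 1, 2, 3 :: nat}"
    by auto
  have X_eq_0: "X i = 0" if "i \<in> {0..<4}" for i
  proof (rule theta_terms_linearly_independent[OF _ Re_t ha, where \<kappa> = \<kappa> and s = s and r = r and j = j])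
    show "\<kappa> i = s i * exp (of_int (r i) * (t / 2)) * a" if "i \<in> {0..<4}" for i
      using that by (auto simp: I \<kappa>_def s_def r_def q_powi q_half mult_exp_exp field_simps)
    show "s i = 1 \<or> s i = -1" if "i \<in> {0..<4}" for i
      using that by (auto simp: I s_def)
    show "inj_on (\<lambda>i. (s i, r i mod 2)) {0..<4}"
      by (simp add: I s_def r_def)
    show "(\<Sum>i\<in>{0..<4}. theta_term (exp t) (\<kappa> i) (X i) (j i) w) = 0" for w
      using hid[rule_format, of w]
      by (simp add: I \<kappa>_def j_def X_def theta_term_def q_eq[symmetric] Let_def add.assoc)
  qed (use that in simp_all)
  show ?thesis
    using X_eq_0[of 0] X_eq_0[of 1] X_eq_0[of 2] X_eq_0[of 3] by (simp add: X_def)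
qed

end
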